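(* Let $n \ge 1$ and let $k,\ell \ge 0$ be integers with $k+\ell \le n$. The number of rooted trees on the vertex set $[n+1]=\{1,\ldots,n+1\}$ in which the root has exactly $k$ children that are smaller than the root and exactly $\ell$ children that are larger than the root equals $$\binom{n+1}{k+\ell+1}\,(k+\ell)\,n^{\,n-k-\ell-1}.$$
   Context: A rooted tree on a vertex set $V$ is a tree with vertex set $V$ together with a distinguished vertex (the root); the children of the root are the vertices adjacent to it. Vertices are compared by their integer labels. *)

theory Defs
  imports Complex_Main
begin

definition simple_graph :: "'a set \<Rightarrow> 'a set set \<Rightarrow> bool" where
  "simple_graph V E \<longleftrightarrow> (\<forall>e\<in>E. \<exists>u v. u \<in> V \<and> v \<in> V \<and> u \<noteq> v \<and> e = {u, v})"

definition adj :: "'a set set \<Rightarrow> 'a \<Rightarrow> 'a \<Rightarrow> bool" where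
  "adj E u v \<longleftrightarrow> {u, v} \<in> E"

definition connected_graph :: "'a set \<Rightarrow> 'a set set \<Rightarrow> bool" where
  "connected_graph V E \<longleftrightarrow> (\<forall>u\<in>V. \<forall>v\<in>V. (adj E)\<^sup>*\<^sup>* u v)"

definition is_cycle :: "'a set set \<Rightarrow> 'a list \<Rightarrow> bool" where
  "is_cycle E cs \<longleftrightarrow> length cs \<ge> 3 \<and> distinct cs \<and>
     (\<forall>i. Suc i < length cs \<longrightarrow> adj E (cs ! i) (cs ! Suc i)) \<and>
     adj E (last cs) (hd cs)"

definition acyclic_graph :: "'a set set \<Rightarrow> bool" where
  "acyclic_graph E \<longleftrightarrow> \<not> (\<exists>cs. is_cycle E cs)"

definition is_tree :: "'a set \<Rightarrow> 'a set set \<Rightarrow> bool" where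
  "is_tree V E \<longleftrightarrow> simple_graph V E \<and> connected_graph V E \<and> acyclic_graph E"

definition rooted_trees :: "'a set \<Rightarrow> ('a set set \<times> 'a) set" where
  "rooted_trees V = {(E, r). is_tree V E \<and> r \<in> V}"

definition children :: "'a set set \<Rightarrow> 'a \<Rightarrow> 'a set" where
  "children E r = {c. {r, c} \<in> E}"

end

theory Submission
  imports Defs "HOL-Library.FuncSet" "HOL-Library.Transitive_Closure_Table"
begin

(* A tree rooted at r is the same as a parent map on V along which every vertex reaches r, and the
   children of r are the vertices whose parent is r. Deleting r turns a tree whose root has children
   set C into a forest on the remaining n vertices with root set exactly C. Forests on N vertices with
   D prescribed roots number D * N^(N-D-1): delete one root s and make its children roots, which
   gives a recursion over the set of those children. Hence the trees rooted at r with k smaller and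
   l larger children number C(r-1,k) C(n+1-r,l) (k+l) n^(n-k-l-1), and summing over r uses
   sum_j C(j,k) C(n-j,l) = C(n+1,k+l+1). *)

section \<open>Rooted forests as parent maps\<close>

text \<open>A forest on \<open>A\<close> with root set \<open>S\<close> is encoded by its parent map, which is the identity
  off \<open>A - S\<close>, so that each forest has exactly one encoding.\<close>
definition rooted_forest :: "'a set \<Rightarrow> 'a set \<Rightarrow> ('a \<Rightarrow> 'a) \<Rightarrow> bool" where
  "rooted_forest A S p \<longleftrightarrow> (\<forall>v. v \<notin> A - S \<longrightarrow> p v = v) \<and> (\<forall>v\<in>A - S. p v \<in> A)
     \<and> (\<forall>v\<in>A. \<exists>k. (p ^^ k) v \<in> S)"

lemma rooted_forest_fixed: "rooted_forest A S p \<Longrightarrow> v \<notin> A - S \<Longrightarrow> p v = v"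
  unfolding rooted_forest_def by blast

lemma rooted_forest_parent_in: "rooted_forest A S p \<Longrightarrow> v \<in> A - S \<Longrightarrow> p v \<in> A"
  unfolding rooted_forest_def by blast

lemma rooted_forest_reaches_roots: "rooted_forest A S p \<Longrightarrow> v \<in> A \<Longrightarrow> \<exists>k. (p ^^ k) v \<in> S"
  unfolding rooted_forest_def by blast

lemma rooted_forest_maps_into: "rooted_forest A S p \<Longrightarrow> v \<in> A \<Longrightarrow> p v \<in> A"
  using rooted_forest_fixed rooted_forest_parent_in by metis

lemma rooted_forest_eqI:
  assumes "rooted_forest A S p" "rooted_forest A S q" "\<And>v. v \<in> A - S \<Longrightarrow> p v = q v"
  shows "p = q"
  using assms rooted_forest_fixed by (metis ext)

lemma finite_rooted_forests:
  assumes "finite A"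
  shows "finite {p. rooted_forest A S p}"
proof -
  have "inj_on (\<lambda>p. restrict p A) {p. rooted_forest A S p}"
  proof (rule inj_onI)
    fix p q assume "p \<in> {p. rooted_forest A S p}" "q \<in> {p. rooted_forest A S p}"
      and "restrict p A = restrict q A"
    then show "p = q" by (metis mem_Collect_eq rooted_forest_eqI restrict_apply' DiffD1)
  qed
  moreover have "(\<lambda>p. restrict p A) ` {p. rooted_forest A S p} \<subseteq> A \<rightarrow>\<^sub>E A"
    using rooted_forest_maps_into by fastforce
  ultimately show ?thesis
    using assms by (metis finite_PiE finite_imageD finite_subset)
qed

lemma funpow_reaches_transfer:
  assumes "(f ^^ k) x \<in> T" "x \<in> B"
    and "\<And>y. y \<in> B \<Longrightarrow> y \<notin> T' \<Longrightarrow> y \<notin> T \<and> g y = f y \<and> f y \<in> B"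
  shows "\<exists>j. (g ^^ j) x \<in> T'"
  using assms(1,2)
proof (induction k arbitrary: x)
  case 0
  then show ?case using assms(3) by (metis funpow_0)
next
  case (Suc k)
  show ?case
  proof (cases "x \<in> T'")
    case True
    then show ?thesis by (metis funpow_0)
  next
    case False
    then have "g x = f x" "f x \<in> B" using assms(3) Suc.prems(2) by auto
    moreover have "(f ^^ k) (f x) \<in> T" using Suc.prems(1) by (simp add: funpow_swap1)
    ultimately obtain j where "(g ^^ j) (g x) \<in> T'" using Suc.IH by auto
    then have "(g ^^ Suc j) x \<in> T'" by (simp add: funpow_swap1)
    then show ?thesis ..
  qed
qed

lemma rooted_forest_detach_children:
  assumes p: "rooted_forest A S p" and "s \<in> S" and I: "{v \<in> A - S. p v = s} = I"
  shows "rooted_forest (A - {s}) (S - {s} \<union> I) (\<lambda>v. if v \<in> I then v else p v)"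
    (is "rooted_forest _ _ ?q")
  unfolding rooted_forest_def
proof (intro conjI allI ballI impI)
  fix v assume "v \<notin> A - {s} - (S - {s} \<union> I)"
  then show "?q v = v" using p \<open>s \<in> S\<close> by (auto simp: rooted_forest_fixed)
next
  fix v assume "v \<in> A - {s} - (S - {s} \<union> I)"
  then have "v \<in> A - S" "v \<notin> I" by auto
  then show "?q v \<in> A - {s}" using rooted_forest_parent_in[OF p] I[symmetric] by auto
next
  fix v assume v: "v \<in> A - {s}"
  have step: "y \<notin> S \<and> ?q y = p y \<and> p y \<in> A - {s}" if "y \<in> A - {s}" "y \<notin> S - {s} \<union> I" for y
  proof -
    have "y \<in> A - S" "y \<notin> I" using that by auto
    then show ?thesis using rooted_forest_parent_in[OF p] I[symmetric] by auto
  qed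
  obtain k where "(p ^^ k) v \<in> S" using rooted_forest_reaches_roots[OF p] v by blast
  then show "\<exists>k. (?q ^^ k) v \<in> S - {s} \<union> I"
    using v step by (rule funpow_reaches_transfer)
qed

lemma rooted_forest_attach_children:
  assumes q: "rooted_forest (A - {s}) (S - {s} \<union> I) q"
    and "s \<in> S" "S \<subseteq> A" "I \<subseteq> A - S"
  defines "p \<equiv> \<lambda>v. if v \<in> I then s else q v"
  shows "rooted_forest A S p" and "{v \<in> A - S. p v = s} = I"
proof -
  have q_parent: "q v \<in> A - {s}" if "v \<in> A - S - I" for v
  proof -
    have "v \<in> A - {s} - (S - {s} \<union> I)" using that \<open>s \<in> S\<close> by auto
    then show ?thesis by (rule rooted_forest_parent_in[OF q])
  qed
  show "{v \<in> A - S. p v = s} = I"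
    using q_parent \<open>I \<subseteq> A - S\<close> by (auto simp: p_def)
  have reach: "\<exists>k. (p ^^ k) v \<in> S" if "v \<in> A" for v
  proof (cases "v = s")
    case True
    then show ?thesis using \<open>s \<in> S\<close> by (metis funpow_0)
  next
    case False
    then obtain k where "(q ^^ k) v \<in> S - {s} \<union> I"
      using rooted_forest_reaches_roots[OF q] \<open>v \<in> A\<close> by blast
    moreover have "y \<notin> S - {s} \<union> I \<and> p y = q y \<and> q y \<in> A - {s}"
      if "y \<in> A - {s}" "y \<notin> S \<union> I" for y
      using that q_parent[of y] by (simp add: p_def)
    ultimately obtain j where j: "(p ^^ j) v \<in> S \<union> I"
      using False \<open>v \<in> A\<close> funpow_reaches_transfer[where B = "A - {s}" and T' = "S \<union> I"]
      by blast
    show ?thesis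
    proof (cases "(p ^^ j) v \<in> I")
      case True
      then have "(p ^^ Suc j) v \<in> S" using \<open>s \<in> S\<close> by (simp add: p_def)
      then show ?thesis ..
    qed (use j in blast)
  qed
  have "p v = v" if "v \<notin> A - S" for v
    using rooted_forest_fixed[OF q, of v] that assms(2,4) by (auto simp: p_def)
  moreover have "p v \<in> A" if "v \<in> A - S" for v
    using q_parent[of v] that assms(2,3) by (auto simp: p_def)
  ultimately show "rooted_forest A S p"
    unfolding rooted_forest_def using reach by blast
qed

lemma bij_betw_detach_children:
  assumes "s \<in> S" "S \<subseteq> A" "I \<subseteq> A - S"
  shows "bij_betw (\<lambda>p v. if v \<in> I then v else p v)
           {p. rooted_forest A S p \<and> {v \<in> A - S. p v = s} = I}
           {q. rooted_forest (A - {s}) (S - {s} \<union> I) q}"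
proof (rule bij_betw_byWitness[where f' = "\<lambda>q v. if v \<in> I then s else q v"])
  show "(\<lambda>p v. if v \<in> I then v else p v) ` {p. rooted_forest A S p \<and> {v \<in> A - S. p v = s} = I}
        \<subseteq> {q. rooted_forest (A - {s}) (S - {s} \<union> I) q}"
  proof (rule image_subsetI)
    fix p assume "p \<in> {p. rooted_forest A S p \<and> {v \<in> A - S. p v = s} = I}"
    then show "(\<lambda>v. if v \<in> I then v else p v) \<in> {q. rooted_forest (A - {s}) (S - {s} \<union> I) q}"
      using rooted_forest_detach_children[OF _ \<open>s \<in> S\<close>] by blast
  qed
  show "(\<lambda>q v. if v \<in> I then s else q v) ` {q. rooted_forest (A - {s}) (S - {s} \<union> I) q}
        \<subseteq> {p. rooted_forest A S p \<and> {v \<in> A - S. p v = s} = I}"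
    using rooted_forest_attach_children[OF _ assms] by (intro image_subsetI) simp
  show "\<forall>p \<in> {p. rooted_forest A S p \<and> {v \<in> A - S. p v = s} = I}.
          (\<lambda>v. if v \<in> I then s else if v \<in> I then v else p v) = p"
  proof (intro ballI ext)
    fix p v assume "p \<in> {p. rooted_forest A S p \<and> {v \<in> A - S. p v = s} = I}"
    then have "p v = s" if "v \<in> I" using that by blast
    then show "(if v \<in> I then s else if v \<in> I then v else p v) = p v" by simp
  qed
  show "\<forall>q \<in> {q. rooted_forest (A - {s}) (S - {s} \<union> I) q}.
          (\<lambda>v. if v \<in> I then v else if v \<in> I then s else q v) = q"
  proof (intro ballI ext)
    fix q v assume "q \<in> {q. rooted_forest (A - {s}) (S - {s} \<union> I) q}"
    then have "q v = v" if "v \<in> I" using rooted_forest_fixed that by fastforce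
    then show "(if v \<in> I then v else if v \<in> I then s else q v) = q v" by simp
  qed
qed

text \<open>The case \<open>D = N\<close> is separate: with truncated subtraction the general formula would give
  \<open>N\<close> instead of \<open>1\<close>.\<close>
definition forest_count :: "nat \<Rightarrow> nat \<Rightarrow> nat" where
  "forest_count N D = (if D = N then 1 else D * N ^ (N - D - 1))"

lemma sum_Pow_card:
  assumes "finite B"
  shows "(\<Sum>I\<in>Pow B. g (card I)) = (\<Sum>i\<le>card B. (card B choose i) * g i)"
proof -
  have "(\<Sum>I\<in>Pow B. g (card I)) = (\<Sum>i\<le>card B. \<Sum>I\<in>{I\<in>Pow B. card I = i}. g (card I))"
    by (rule sum.group[symmetric]) (use assms card_mono in auto)
  also have "\<dots> = (\<Sum>i\<le>card B. (card B choose i) * g i)"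
  proof (rule sum.cong[OF refl])
    fix i
    have "{I\<in>Pow B. card I = i} = {I. I \<subseteq> B \<and> card I = i}" by auto
    then show "(\<Sum>I\<in>{I\<in>Pow B. card I = i}. g (card I)) = (card B choose i) * g i"
      using n_subsets[OF assms] by simp
  qed
  finally show ?thesis .
qed

lemma sum_binomial_times_index:
  "(\<Sum>i\<le>m. (m choose i) * i * x ^ (m - i)) = m * (x + 1 :: nat) ^ (m - 1)"
proof (cases m)
  case 0
  then show ?thesis by simp
next
  case (Suc m')
  have "(\<Sum>i\<le>m. (m choose i) * i * x ^ (m - i))
      = (\<Sum>i\<le>m'. (Suc m' choose Suc i) * Suc i * x ^ (m' - i))"
    unfolding Suc by (subst sum.atMost_Suc_shift) simp
  also have "\<dots> = Suc m' * (\<Sum>i\<le>m'. (m' choose i) * x ^ (m' - i))"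
    unfolding sum_distrib_left by (rule sum.cong[OF refl]) (metis Suc_times_binomial mult.commute mult.assoc)
  also have "\<dots> = Suc m' * (x + 1) ^ m'"
    using binomial[of 1 x m'] by (simp add: add.commute)
  finally show ?thesis using Suc by simp
qed

lemma forest_count_rec:
  assumes "d \<ge> 1" "m \<ge> 1"
  shows "(\<Sum>i\<le>m. (m choose i) * forest_count (d + m - 1) (d - 1 + i)) = forest_count (d + m) d"
proof -
  define x where "x = d + m - 1"
  have x: "x = d - 1 + m" "x \<ge> 1" using assms by (auto simp: x_def)
  have summand: "x * forest_count x (d - 1 + i) = (d - 1 + i) * x ^ (m - i)" if "i \<le> m" for i
  proof (cases "i = m")
    case True
    then show ?thesis using x by (simp add: forest_count_def)
  next
    case False
    then have "x - (d - 1 + i) - 1 = m - i - 1" "m - i = Suc (m - i - 1)" using that x by auto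
    then show ?thesis using False that x by (simp add: forest_count_def)
  qed
  have "x * (\<Sum>i\<le>m. (m choose i) * forest_count x (d - 1 + i))
      = (\<Sum>i\<le>m. (m choose i) * (d - 1 + i) * x ^ (m - i))"
    unfolding sum_distrib_left
  proof (rule sum.cong[OF refl])
    fix i assume "i \<in> {..m}"
    then show "x * ((m choose i) * forest_count x (d - 1 + i)) = (m choose i) * (d - 1 + i) * x ^ (m - i)"
      using summand[of i] by (simp add: ac_simps)
  qed
  also have "\<dots> = (d - 1) * (\<Sum>i\<le>m. (m choose i) * x ^ (m - i)) + (\<Sum>i\<le>m. (m choose i) * i * x ^ (m - i))"
    by (simp add: sum_distrib_left sum.distrib algebra_simps)
  also have "\<dots> = (d - 1) * (x + 1) ^ m + m * (x + 1) ^ (m - 1)"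
    using binomial[of 1 x m] by (simp add: sum_binomial_times_index add.commute)
  also have "\<dots> = (x + 1) ^ (m - 1) * ((d - 1) * (x + 1) + m)"
    using assms by (cases m) (auto simp: algebra_simps)
  also have "(d - 1) * (x + 1) + m = d * x"
    using x assms by (cases d) (auto simp: algebra_simps)
  finally have "x * (\<Sum>i\<le>m. (m choose i) * forest_count x (d - 1 + i)) = x * (d * (d + m) ^ (m - 1))"
    using x assms by (simp add: algebra_simps)
  then show ?thesis
    using x assms by (simp add: forest_count_def x_def)
qed

lemma real_forest_count:
  assumes "N \<ge> 1" "D \<le> N"
  shows "real (forest_count N D) = real D * real N powi (int N - int D - 1)"
proof (cases "D = N")
  case True
  then have exponent: "int N - int D - 1 = -1" by simp
  have "real N \<noteq> 0" using assms(1) by simp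
  then show ?thesis
    using True by (simp only: exponent power_int_minus1_right) (simp add: forest_count_def)
next
  case False
  then have exponent: "int N - int D - 1 = int (N - D - 1)" using assms(2) by simp
  show ?thesis
    using False by (simp only: exponent power_int_of_nat) (simp add: forest_count_def)
qed

lemma card_rooted_forests_by_children:
  assumes "finite A" "s \<in> S" "S \<subseteq> A"
  shows "card {p. rooted_forest A S p}
       = (\<Sum>I\<in>Pow (A - S). card {q. rooted_forest (A - {s}) (S - {s} \<union> I) q})"
proof -
  let ?children = "\<lambda>p. {v \<in> A - S. p v = s}"
  have "?children ` {p. rooted_forest A S p} \<subseteq> Pow (A - S)" by auto
  from sum.group[OF finite_rooted_forests[OF assms(1)] _ this, of "\<lambda>_. 1::nat"]
  have "card {p. rooted_forest A S p}
      = (\<Sum>I\<in>Pow (A - S). card {p. rooted_forest A S p \<and> ?children p = I})"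
    using assms(1) by simp
  also have "\<dots> = (\<Sum>I\<in>Pow (A - S). card {q. rooted_forest (A - {s}) (S - {s} \<union> I) q})"
    using assms by (intro sum.cong refl bij_betw_same_card[OF bij_betw_detach_children]) auto
  finally show ?thesis .
qed

theorem card_rooted_forests:
  assumes "finite A" "S \<subseteq> A"
  shows "card {p. rooted_forest A S p} = forest_count (card A) (card S)"
  using assms
proof (induction "card A" arbitrary: A S rule: less_induct)
  case less
  note fin = less.prems(1) and SA = less.prems(2)
  consider "S = A" | "S = {}" "A \<noteq> {}" | s where "s \<in> S" "S \<noteq> A" by blast
  then show ?case
  proof cases
    case 1
    have "rooted_forest A S p \<longleftrightarrow> p = id" for p
      using 1 by (auto simp: rooted_forest_def fun_eq_iff intro: exI[of _ 0])
    then have "{p. rooted_forest A S p} = {id}" by blast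
    then show ?thesis using 1 by (simp add: forest_count_def)
  next
    case 2
    then have "{p. rooted_forest A S p} = {}"
      using rooted_forest_reaches_roots by fastforce
    then have "card {p. rooted_forest A S p} = 0" by (simp only: card.empty)
    then show ?thesis using 2 fin by (simp add: forest_count_def)
  next
    case 3
    have "finite S" using fin SA finite_subset by blast
    have IH: "card {q. rooted_forest (A - {s}) (S - {s} \<union> I) q}
        = forest_count (card A - 1) (card S - 1 + card I)" if "I \<in> Pow (A - S)" for I
    proof -
      have "card (S - {s} \<union> I) = card S - 1 + card I"
        using fin SA that 3 \<open>finite S\<close> finite_subset[of I A] by (subst card_Un_disjoint) auto
      moreover have "card {q. rooted_forest (A - {s}) (S - {s} \<union> I) q}
          = forest_count (card (A - {s})) (card (S - {s} \<union> I))"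
        by (rule less.hyps) (use fin that SA 3 in \<open>auto intro: card_Diff1_less\<close>)
      ultimately show ?thesis using 3 SA by auto
    qed
    have "card {p. rooted_forest A S p}
        = (\<Sum>I\<in>Pow (A - S). forest_count (card A - 1) (card S - 1 + card I))"
      using card_rooted_forests_by_children[OF fin 3(1) SA] by (simp add: IH)
    also have "\<dots> = (\<Sum>i\<le>card (A - S). (card (A - S) choose i) * forest_count (card A - 1) (card S - 1 + i))"
      by (rule sum_Pow_card) (use fin in simp)
    also have "\<dots> = forest_count (card A) (card S)"
    proof -
      have "1 \<le> card S" "card S < card A"
        using 3 SA fin \<open>finite S\<close> by (auto simp: Suc_le_eq card_gt_0_iff intro: psubset_card_mono)
      moreover have "card (A - S) = card A - card S"
        using SA \<open>finite S\<close> by (simp add: card_Diff_subset)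
      ultimately show ?thesis
        using forest_count_rec[of "card S" "card (A - S)"] by simp
    qed
    finally show ?thesis .
  qed
qed

section \<open>Trees rooted at a vertex\<close>

definition parent_edges :: "'a set \<Rightarrow> 'a \<Rightarrow> ('a \<Rightarrow> 'a) \<Rightarrow> 'a set set" where
  "parent_edges V r p = {{v, p v} | v. v \<in> V - {r}}"

definition depth :: "('a \<Rightarrow> 'a) \<Rightarrow> 'a \<Rightarrow> 'a \<Rightarrow> nat" where
  "depth p r v = (LEAST k. (p ^^ k) v = r)"

lemma depth_parent:
  assumes p: "rooted_forest V {r} p" and v: "v \<in> V - {r}"
  shows "depth p r v = Suc (depth p r (p v))"
proof -
  obtain n where "(p ^^ n) v = r" using rooted_forest_reaches_roots[OF p] v by auto
  then have "depth p r v = Suc (LEAST m. (p ^^ Suc m) v = r)"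
    unfolding depth_def by (rule Least_Suc) (use v in simp)
  then show ?thesis by (simp add: depth_def funpow_swap1)
qed

lemma rooted_forest_parent_neq:
  "rooted_forest V {r} p \<Longrightarrow> v \<in> V - {r} \<Longrightarrow> p v \<noteq> v"
  using depth_parent by (metis n_not_Suc_n)

lemma rooted_forest_of_decreasing:
  fixes f :: "'a \<Rightarrow> nat"
  assumes "\<And>v. v \<notin> V - {r} \<Longrightarrow> p v = v"
    and "\<And>v. v \<in> V - {r} \<Longrightarrow> p v \<in> V \<and> f (p v) < f v"
  shows "rooted_forest V {r} p"
proof -
  have "\<exists>k. (p ^^ k) v \<in> {r}" if "v \<in> V" for v
    using that
  proof (induction v rule: measure_induct_rule[of f])
    case (less v)
    show ?case
    proof (cases "v = r")
      case True
      then show ?thesis by (metis funpow_0 singletonI)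
    next
      case False
      then obtain k where "(p ^^ k) (p v) \<in> {r}" using less assms(2) by blast
      then have "(p ^^ Suc k) v \<in> {r}" by (simp add: funpow_swap1)
      then show ?thesis ..
    qed
  qed
  then show ?thesis using assms unfolding rooted_forest_def by blast
qed

lemma symp_adj: "symp (adj E)"
  by (rule sympI) (simp add: adj_def insert_commute)

lemma adj_parent_edges_iff:
  "adj (parent_edges V r p) a b \<longleftrightarrow> (a \<in> V - {r} \<and> b = p a) \<or> (b \<in> V - {r} \<and> a = p b)"
  unfolding adj_def parent_edges_def by (auto simp: doubleton_eq_iff)

lemma children_parent_edges:
  "children (parent_edges V r p) r = {c \<in> V - {r}. p c = r}"
  using adj_parent_edges_iff[of V r p r] unfolding children_def adj_def by auto

lemma connected_parent_edges:
  assumes p: "rooted_forest V {r} p"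
  shows "connected_graph V (parent_edges V r p)"
proof -
  let ?R = "adj (parent_edges V r p)"
  have to_root: "?R\<^sup>*\<^sup>* v r" if v: "v \<in> V" for v
  proof -
    obtain k where "(p ^^ k) v = r" using rooted_forest_reaches_roots[OF p v] by auto
    then show ?thesis using v
    proof (induction k arbitrary: v)
      case (Suc k)
      show ?case
      proof (cases "v = r")
        case False
        then have "?R v (p v)" "p v \<in> V" "(p ^^ k) (p v) = r"
          using Suc.prems rooted_forest_parent_in[OF p]
          by (auto simp: adj_parent_edges_iff funpow_swap1)
        then show ?thesis using Suc.IH converse_rtranclp_into_rtranclp by metis
      qed simp
    qed simp
  qed
  have "?R\<^sup>*\<^sup>* r v" if "v \<in> V" for v
    using sympD[OF symp_rtranclp[OF symp_adj] to_root[OF that]] .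
  then show ?thesis
    unfolding connected_graph_def using to_root rtranclp_trans by metis
qed

lemma simple_graph_parent_edges:
  assumes "rooted_forest V {r} p" "r \<in> V"
  shows "simple_graph V (parent_edges V r p)"
  unfolding simple_graph_def parent_edges_def
proof
  fix e assume "e \<in> {{v, p v} | v. v \<in> V - {r}}"
  then obtain v where "v \<in> V - {r}" "e = {v, p v}" by blast
  moreover have "p v \<in> V" "p v \<noteq> v"
    using calculation rooted_forest_maps_into[OF assms(1)] rooted_forest_parent_neq[OF assms(1)] by auto
  ultimately show "\<exists>a b. a \<in> V \<and> b \<in> V \<and> a \<noteq> b \<and> e = {a, b}" by blast
qed

lemma is_cycle_two_neighbours:
  assumes cs: "is_cycle E cs" and i: "i < length cs"
  obtains j j' where "j < length cs" "j' < length cs" "j \<noteq> j'"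
    "adj E (cs ! i) (cs ! j)" "adj E (cs ! i) (cs ! j')"
proof -
  have len: "length cs \<ge> 3" and ne: "cs \<noteq> []" using cs by (auto simp: is_cycle_def)
  have path: "adj E (cs ! m) (cs ! Suc m)" if "Suc m < length cs" for m
    using cs that by (simp add: is_cycle_def)
  have closing: "adj E (cs ! (length cs - 1)) (cs ! 0)"
    using cs ne by (simp add: is_cycle_def last_conv_nth hd_conv_nth)
  define j where "j = (if Suc i < length cs then Suc i else 0)"
  define j' where "j' = (if i = 0 then length cs - 1 else i - 1)"
  have "adj E (cs ! i) (cs ! j)"
  proof (cases "Suc i < length cs")
    case False
    then have "i = length cs - 1" using i by simp
    then show ?thesis using closing False by (simp add: j_def)
  qed (simp add: j_def path)
  moreover have "adj E (cs ! j') (cs ! i)"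
  proof (cases i)
    case (Suc i')
    then show ?thesis using path[of i'] i by (simp add: j'_def)
  qed (use closing in \<open>simp add: j'_def\<close>)
  moreover have "j < length cs" "j' < length cs" "j \<noteq> j'"
    using i len by (auto simp: j_def j'_def)
  ultimately show ?thesis using that[of j j'] sympD[OF symp_adj, of E "cs ! j'" "cs ! i"] by blast
qed

(* A deepest vertex of a cycle cannot be the parent of a cycle neighbour, so both of its
   cycle neighbours are its own parent. *)
lemma acyclic_parent_edges:
  assumes p: "rooted_forest V {r} p"
  shows "acyclic_graph (parent_edges V r p)"
  unfolding acyclic_graph_def
proof
  assume "\<exists>cs. is_cycle (parent_edges V r p) cs"
  then obtain cs where cs: "is_cycle (parent_edges V r p) cs" by blast
  then have "cs \<noteq> []" by (auto simp: is_cycle_def)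
  let ?depths = "(\<lambda>j. depth p r (cs ! j)) ` {..<length cs}"
  have "Max ?depths \<in> ?depths" using \<open>cs \<noteq> []\<close> by (intro Max_in) auto
  then obtain i where i: "i < length cs" and "depth p r (cs ! i) = Max ?depths" by force
  then have deepest: "depth p r (cs ! j) \<le> depth p r (cs ! i)" if "j < length cs" for j
    using that by simp
  have to_parent: "cs ! j = p (cs ! i)" if "j < length cs" "adj (parent_edges V r p) (cs ! i) (cs ! j)" for j
  proof (rule ccontr)
    assume "cs ! j \<noteq> p (cs ! i)"
    then have "cs ! j \<in> V - {r}" "cs ! i = p (cs ! j)"
      using that(2) by (auto simp: adj_parent_edges_iff)
    then show False using depth_parent[OF p, of "cs ! j"] deepest[OF that(1)] by simp
  qed
  obtain j j' where "j < length cs" "j' < length cs" "j \<noteq> j'"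
    "adj (parent_edges V r p) (cs ! i) (cs ! j)" "adj (parent_edges V r p) (cs ! i) (cs ! j')"
    using is_cycle_two_neighbours[OF cs i] .
  then have "cs ! j = cs ! j'" using to_parent by metis
  then show False
    using cs \<open>j < length cs\<close> \<open>j' < length cs\<close> \<open>j \<noteq> j'\<close> by (simp add: is_cycle_def nth_eq_iff_index_eq)
qed

(* If the edge {v, p v} came from q as {p v, q (p v)}, then inductively p (p v) = v,
   contradicting the decrease of depth. *)
lemma parent_edges_inj:
  assumes p: "rooted_forest V {r} p" and q: "rooted_forest V {r} q"
    and eq: "parent_edges V r p = parent_edges V r q"
  shows "p = q"
proof (rule rooted_forest_eqI[OF p q])
  fix v assume "v \<in> V - {r}"
  then show "p v = q v"
  proof (induction v rule: measure_induct_rule[of "depth p r"])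
    case (less v)
    have "adj (parent_edges V r q) v (p v)"
      using less.prems eq[symmetric] by (simp add: adj_parent_edges_iff)
    then consider "p v = q v" | "p v \<in> V - {r}" "v = q (p v)"
      using less.prems by (auto simp: adj_parent_edges_iff)
    then show ?case
    proof cases
      case 2
      have "depth p r (p v) < depth p r v" using depth_parent[OF p less.prems] by simp
      then have "p (p v) = v" using less.IH[OF _ 2(1)] 2(2) by simp
      then show ?thesis
        using depth_parent[OF p less.prems] depth_parent[OF p 2(1)] by simp
    qed
  qed
qed

lemma rtrancl_path_last_nth:
  assumes "rtrancl_path R x xs y"
  shows "last (x # xs) = y"
    and "Suc i < length (x # xs) \<Longrightarrow> R ((x # xs) ! i) ((x # xs) ! Suc i)"
  using assms by (induction arbitrary: i) (auto simp: nth_Cons split: nat.split)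

lemma rtranclp_distinct_path:
  assumes "R\<^sup>*\<^sup>* a b"
  obtains xs where "distinct (a # xs)" "last (a # xs) = b"
    "\<And>i. Suc i < length (a # xs) \<Longrightarrow> R ((a # xs) ! i) ((a # xs) ! Suc i)"
proof -
  obtain ys where "rtrancl_path R a ys b"
    using assms by (auto simp: rtranclp_eq_rtrancl_path)
  then obtain xs where path: "rtrancl_path R a xs b" and "distinct (a # xs)"
    by (rule rtrancl_path_distinct)
  show ?thesis using that[OF \<open>distinct (a # xs)\<close> rtrancl_path_last_nth[OF path]] .
qed

lemma adj_mono: "E \<subseteq> F \<Longrightarrow> adj E \<le> adj F"
  unfolding adj_def by auto

(* An edge of E missing from F would close a cycle with an F-path between its endpoints. *)
lemma connected_spanning_subgraph_of_acyclic_eq: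
  assumes sg: "simple_graph V E" and ac: "acyclic_graph E"
    and sub: "F \<subseteq> E" and conn: "connected_graph V F"
  shows "F = E"
proof (rule ccontr)
  assume "F \<noteq> E"
  then obtain e where e: "e \<in> E" "e \<notin> F" using sub by blast
  then obtain a b where ab: "a \<in> V" "b \<in> V" "a \<noteq> b" "e = {a, b}"
    using sg unfolding simple_graph_def by blast
  have "(adj F)\<^sup>*\<^sup>* a b" using conn ab unfolding connected_graph_def by blast
  moreover have "adj F \<le> adj (E - {e})" using sub e by (intro adj_mono) auto
  ultimately have "(adj (E - {e}))\<^sup>*\<^sup>* a b" by (metis rtranclp_mono predicate2D)
  then obtain xs where xs: "distinct (a # xs)" "last (a # xs) = b"
    and path: "\<And>i. Suc i < length (a # xs) \<Longrightarrow> adj (E - {e}) ((a # xs) ! i) ((a # xs) ! Suc i)"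
    by (rule rtranclp_distinct_path) blast
  have "length xs \<noteq> 0" using xs ab by auto
  moreover have "length xs \<noteq> 1"
  proof
    assume "length xs = 1"
    then have "xs = [b]" using xs(2) by (cases xs) auto
    then show False using path[of 0] ab by (simp add: adj_def)
  qed
  ultimately have "length (a # xs) \<ge> 3" unfolding length_Cons by linarith
  moreover have "adj E (last (a # xs)) (hd (a # xs))"
    using xs(2) ab e by (simp add: adj_def insert_commute)
  ultimately have "is_cycle E (a # xs)"
    unfolding is_cycle_def using xs(1) path by (auto simp: adj_def)
  then show False using ac unfolding acyclic_graph_def by blast
qed

(* Every vertex other than r gets as parent a neighbour strictly closer to r. *)
lemma connected_graph_parent_map:
  assumes sg: "simple_graph V E" and conn: "connected_graph V E" and r: "r \<in> V"
  obtains p where "rooted_forest V {r} p" "parent_edges V r p \<subseteq> E"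
proof -
  define dist where "dist v = (LEAST k. ((adj E) ^^ k) v r)" for v
  have closer: "\<exists>u. adj E v u \<and> dist u < dist v" if v: "v \<in> V - {r}" for v
  proof -
    have "(adj E)\<^sup>*\<^sup>* v r" using conn v r unfolding connected_graph_def by blast
    then obtain k where "((adj E) ^^ k) v r" using rtranclp_imp_relpowp by metis
    then have k: "((adj E) ^^ dist v) v r" unfolding dist_def by (rule LeastI)
    then obtain k' where k': "dist v = Suc k'" using v by (cases "dist v") auto
    then obtain u where u: "adj E v u" "((adj E) ^^ k') u r"
      using relpowp_Suc_D2[of k' "adj E" v r] k by auto
    have "dist u \<le> k'" unfolding dist_def using u(2) by (rule Least_le)
    then show ?thesis using u k' by auto
  qed
  define p where "p v = (if v \<in> V - {r} then (SOME u. adj E v u \<and> dist u < dist v) else v)" for v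
  have p: "adj E v (p v) \<and> dist (p v) < dist v" if "v \<in> V - {r}" for v
    unfolding p_def using that someI_ex[OF closer[OF that]] by simp
  have "p v \<in> V" if "v \<in> V - {r}" for v
    using p[OF that] sg unfolding adj_def simple_graph_def by (auto simp: doubleton_eq_iff)
  then have "rooted_forest V {r} p"
    using p by (intro rooted_forest_of_decreasing[where f = dist]) (auto simp: p_def)
  moreover have "parent_edges V r p \<subseteq> E"
    using p unfolding parent_edges_def adj_def by blast
  ultimately show ?thesis using that by blast
qed

lemma tree_parent_map:
  assumes "is_tree V E" "r \<in> V"
  obtains p where "rooted_forest V {r} p" "parent_edges V r p = E"
proof -
  have sg: "simple_graph V E" and "connected_graph V E" and "acyclic_graph E"
    using assms(1) unfolding is_tree_def by auto
  obtain p where p: "rooted_forest V {r} p" "parent_edges V r p \<subseteq> E"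
    using connected_graph_parent_map[OF sg \<open>connected_graph V E\<close> assms(2)] .
  have "parent_edges V r p = E"
    using connected_spanning_subgraph_of_acyclic_eq[OF sg \<open>acyclic_graph E\<close> p(2)]
      connected_parent_edges[OF p(1)] by blast
  then show ?thesis using that p(1) by blast
qed

lemma bij_betw_parent_edges:
  assumes "r \<in> V"
  shows "bij_betw (parent_edges V r) {p. rooted_forest V {r} p} {E. is_tree V E}"
  unfolding bij_betw_def
proof
  show "inj_on (parent_edges V r) {p. rooted_forest V {r} p}"
    by (intro inj_onI) (auto intro: parent_edges_inj)
  have "is_tree V (parent_edges V r p)" if "rooted_forest V {r} p" for p
    unfolding is_tree_def using that assms
    by (simp add: simple_graph_parent_edges connected_parent_edges acyclic_parent_edges)
  moreover have "E \<in> parent_edges V r ` {p. rooted_forest V {r} p}" if "is_tree V E" for E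
    using tree_parent_map[OF that assms] by (metis image_eqI mem_Collect_eq)
  ultimately show "parent_edges V r ` {p. rooted_forest V {r} p} = {E. is_tree V E}" by blast
qed

section \<open>Counting by the children of the root\<close>

lemma children_tree_subset:
  assumes "is_tree V E"
  shows "children E r \<subseteq> V - {r}"
  using assms unfolding is_tree_def simple_graph_def children_def by (fastforce simp: doubleton_eq_iff)

lemma finite_trees:
  assumes "finite V"
  shows "finite {E. is_tree V E}"
proof (rule finite_subset)
  show "{E. is_tree V E} \<subseteq> Pow (Pow V)"
  proof
    fix E assume "E \<in> {E. is_tree V E}"
    then have "\<forall>e\<in>E. \<exists>u v. u \<in> V \<and> v \<in> V \<and> u \<noteq> v \<and> e = {u, v}"
      unfolding is_tree_def simple_graph_def by blast
    then show "E \<in> Pow (Pow V)" by auto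
  qed
qed (use assms in simp)

lemma card_trees_with_children:
  assumes "finite V" "r \<in> V" "S \<subseteq> V - {r}"
  shows "card {E. is_tree V E \<and> children E r = S} = forest_count (card V - 1) (card S)"
proof -
  let ?F = "{p. rooted_forest V {r} p \<and> {c \<in> V - {r}. p c = r} = S}"
  have bij: "bij_betw (parent_edges V r) {p. rooted_forest V {r} p} {E. is_tree V E}"
    using bij_betw_parent_edges[OF assms(2)] .
  have image: "parent_edges V r ` ?F = {E. is_tree V E \<and> children E r = S}"
  proof (intro equalityI subsetI)
    fix E assume "E \<in> parent_edges V r ` ?F"
    then obtain p where p: "p \<in> ?F" and E: "E = parent_edges V r p" by blast
    then have "is_tree V E" using bij_betwE[OF bij] by simp
    then show "E \<in> {E. is_tree V E \<and> children E r = S}"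
      using p E by (simp add: children_parent_edges)
  next
    fix E assume E: "E \<in> {E. is_tree V E \<and> children E r = S}"
    then have "E \<in> parent_edges V r ` {p. rooted_forest V {r} p}"
      using bij_betw_imp_surj_on[OF bij] by simp
    then obtain p where "rooted_forest V {r} p" "E = parent_edges V r p" by blast
    then show "E \<in> parent_edges V r ` ?F"
      using E by (simp add: children_parent_edges)
  qed
  have "inj_on (parent_edges V r) ?F"
    by (rule inj_on_subset[OF bij_betw_imp_inj_on[OF bij]]) blast
  from card_image[OF this] have "card {E. is_tree V E \<and> children E r = S} = card ?F"
    by (simp only: image)
  also have "\<dots> = card {q. rooted_forest (V - {r}) ({r} - {r} \<union> S) q}"
    using assms by (intro bij_betw_same_card[OF bij_betw_detach_children]) simp_all
  also have "{r} - {r} \<union> S = S" by simp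
  also have "card {q. rooted_forest (V - {r}) S q} = forest_count (card (V - {r})) (card S)"
    using assms by (intro card_rooted_forests) auto
  also have "card (V - {r}) = card V - 1" using assms by simp
  finally show ?thesis .
qed

lemma card_trees_by_children:
  assumes "finite V"
  shows "card {E. is_tree V E \<and> P (children E r)}
       = (\<Sum>S\<in>{S \<in> Pow (V - {r}). P S}. card {E. is_tree V E \<and> children E r = S})"
proof -
  let ?T = "{E. is_tree V E \<and> P (children E r)}"
  have "finite ?T" using finite_trees[OF assms] by (rule finite_subset[rotated]) blast
  moreover have "(\<lambda>E. children E r) ` ?T \<subseteq> {S \<in> Pow (V - {r}). P S}"
  proof (rule image_subsetI)
    fix E assume "E \<in> ?T"
    then show "children E r \<in> {S \<in> Pow (V - {r}). P S}" using children_tree_subset[of V E r] by auto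
  qed
  ultimately have "card ?T = (\<Sum>S\<in>{S \<in> Pow (V - {r}). P S}. card {E \<in> ?T. children E r = S})"
    using sum.group[of ?T "{S \<in> Pow (V - {r}). P S}" "\<lambda>E. children E r" "\<lambda>_. 1::nat"] assms
    by simp
  also have "\<dots> = (\<Sum>S\<in>{S \<in> Pow (V - {r}). P S}. card {E. is_tree V E \<and> children E r = S})"
    by (intro sum.cong refl arg_cong[where f = card]) auto
  finally show ?thesis .
qed

lemma card_subsets_below_above:
  fixes r :: "'a :: linorder"
  assumes "finite V"
  shows "card {S \<in> Pow (V - {r}). card {c \<in> S. c < r} = k \<and> card {c \<in> S. c > r} = l}
       = (card {v \<in> V. v < r} choose k) * (card {v \<in> V. v > r} choose l)"
proof -
  let ?L = "{v \<in> V. v < r}" and ?U = "{v \<in> V. v > r}"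
  let ?T = "{S \<in> Pow (V - {r}). card {c \<in> S. c < r} = k \<and> card {c \<in> S. c > r} = l}"
  let ?P = "{A. A \<subseteq> ?L \<and> card A = k} \<times> {B. B \<subseteq> ?U \<and> card B = l}"
  have "bij_betw (\<lambda>S. ({c \<in> S. c < r}, {c \<in> S. c > r})) ?T ?P"
  proof (rule bij_betw_byWitness[where f' = "\<lambda>(A, B). A \<union> B"])
    show "\<forall>S\<in>?T. (\<lambda>(A, B). A \<union> B) ({c \<in> S. c < r}, {c \<in> S. c > r}) = S" by auto
    show "\<forall>AB\<in>?P. (\<lambda>S. ({c \<in> S. c < r}, {c \<in> S. c > r})) ((\<lambda>(A, B). A \<union> B) AB) = AB"
      by fastforce
    show "(\<lambda>S. ({c \<in> S. c < r}, {c \<in> S. c > r})) ` ?T \<subseteq> ?P" by auto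
    show "(\<lambda>(A, B). A \<union> B) ` ?P \<subseteq> ?T"
    proof
      fix S assume "S \<in> (\<lambda>(A, B). A \<union> B) ` ?P"
      then obtain A B where AB: "S = A \<union> B" "A \<subseteq> ?L" "B \<subseteq> ?U" "card A = k" "card B = l"
        by auto
      then have "{c \<in> S. c < r} = A" "{c \<in> S. c > r} = B" by auto
      moreover have "S \<subseteq> V - {r}" using AB by auto
      ultimately show "S \<in> ?T" using AB by simp
    qed
  qed
  then have "card ?T = card ?P" by (rule bij_betw_same_card)
  also have "\<dots> = (card ?L choose k) * (card ?U choose l)"
    using assms by (simp add: card_cartesian_product n_subsets)
  finally show ?thesis .
qed

lemma card_trees_children_below_above:
  fixes r :: "'a :: linorder"
  assumes "finite V" "r \<in> V"
  shows "card {E. is_tree V E \<and> card {c \<in> children E r. c < r} = k \<and> card {c \<in> children E r. c > r} = l}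
       = (card {v \<in> V. v < r} choose k) * (card {v \<in> V. v > r} choose l) * forest_count (card V - 1) (k + l)"
proof -
  let ?good = "\<lambda>S. card {c \<in> S. c < r} = k \<and> card {c \<in> S. c > r} = l"
  let ?Ss = "{S \<in> Pow (V - {r}). ?good S}"
  have card_good: "card S = k + l" if S: "S \<in> ?Ss" for S
  proof -
    have "finite S" using S assms(1) finite_subset by auto
    have "S = {c \<in> S. c < r} \<union> {c \<in> S. c > r}" using S by auto
    then have "card S = card ({c \<in> S. c < r} \<union> {c \<in> S. c > r})" by (rule arg_cong)
    also have "\<dots> = card {c \<in> S. c < r} + card {c \<in> S. c > r}"
      by (rule card_Un_disjoint) (use \<open>finite S\<close> in auto)
    finally show ?thesis using S by simp
  qed
  have "card {E. is_tree V E \<and> ?good (children E r)}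
      = (\<Sum>S\<in>?Ss. card {E. is_tree V E \<and> children E r = S})"
    by (rule card_trees_by_children[OF assms(1)])
  also have "\<dots> = (\<Sum>S\<in>?Ss. forest_count (card V - 1) (k + l))"
  proof (rule sum.cong[OF refl])
    fix S assume S: "S \<in> ?Ss"
    then have "S \<subseteq> V - {r}" by simp
    then show "card {E. is_tree V E \<and> children E r = S} = forest_count (card V - 1) (k + l)"
      using card_trees_with_children[OF assms] card_good[OF S] by simp
  qed
  also have "\<dots> = (card {v \<in> V. v < r} choose k) * (card {v \<in> V. v > r} choose l) * forest_count (card V - 1) (k + l)"
    using card_subsets_below_above[OF assms(1)] by simp
  finally show ?thesis .
qed

lemma sum_choose_times_choose_diff:
  "(\<Sum>j\<le>n. (j choose k) * ((n - j) choose l)) = Suc n choose (k + l + 1)"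
proof (induction n arbitrary: l)
  case 0
  then show ?case by (cases k; cases l) auto
next
  case (Suc n)
  show ?case
  proof (cases l)
    case 0
    then show ?thesis using sum_choose_upper[of k "Suc n"] by simp
  next
    case (Suc l')
    have "(\<Sum>j\<le>Suc n. (j choose k) * ((Suc n - j) choose l))
        = (\<Sum>j\<le>n. (j choose k) * ((n - j) choose l') + (j choose k) * ((n - j) choose l))"
      using Suc by (auto simp: Suc_diff_le algebra_simps intro!: sum.cong)
    also have "\<dots> = (Suc n choose (k + l' + 1)) + (Suc n choose (k + l + 1))"
      by (simp add: sum.distrib Suc.IH)
    also have "\<dots> = Suc (Suc n) choose (k + l + 1)" using Suc by simp
    finally show ?thesis .
  qed
qed

lemma sum_choose_below_above:
  "(\<Sum>r\<in>{1..n+1}. ((r - 1) choose k) * ((n + 1 - r) choose l)) = (n + 1) choose (k + l + 1)"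
proof -
  have "{1..n+1} = {Suc 0..Suc n}" by simp
  then have "(\<Sum>r\<in>{1..n+1}. ((r - 1) choose k) * ((n + 1 - r) choose l))
      = (\<Sum>j\<in>{0..n}. ((Suc j - 1) choose k) * ((n + 1 - Suc j) choose l))"
    by (simp only: sum.atLeast_Suc_atMost_Suc_shift comp_def)
  also have "\<dots> = (\<Sum>j\<le>n. (j choose k) * ((n - j) choose l))"
    by (simp add: atLeast0AtMost)
  finally show ?thesis
    by (simp only: sum_choose_times_choose_diff Suc_eq_plus1)
qed

lemma card_rooted_trees_children_below_above:
  fixes n k l :: nat
  shows "card {(E, r) \<in> rooted_trees {1..n+1}.
                 card {c \<in> children E r. c < r} = k \<and> card {c \<in> children E r. c > r} = l}
       = ((n + 1) choose (k + l + 1)) * forest_count n (k + l)"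
proof -
  let ?V = "{1..n+1::nat}"
  let ?trees = "\<lambda>r. {E. is_tree ?V E \<and> card {c \<in> children E r. c < r} = k \<and> card {c \<in> children E r. c > r} = l}"
  have "{(E, r) \<in> rooted_trees ?V. card {c \<in> children E r. c < r} = k \<and> card {c \<in> children E r. c > r} = l}
      = (\<lambda>(r, E). (E, r)) ` (SIGMA r:?V. ?trees r)"
    unfolding rooted_trees_def by auto
  moreover have "inj_on (\<lambda>(r, E). (E, r)) (SIGMA r:?V. ?trees r)"
    by (auto simp: inj_on_def)
  moreover have "finite (?trees r)" for r
    using finite_trees[of ?V] by (rule finite_subset[rotated]) auto
  ultimately have "card {(E, r) \<in> rooted_trees ?V. card {c \<in> children E r. c < r} = k \<and> card {c \<in> children E r. c > r} = l}
      = (\<Sum>r\<in>?V. card (?trees r))"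
    by (simp add: card_image)
  also have "\<dots> = (\<Sum>r\<in>?V. ((r - 1) choose k) * ((n + 1 - r) choose l) * forest_count n (k + l))"
  proof (rule sum.cong[OF refl])
    fix r assume r: "r \<in> ?V"
    then have "{v \<in> ?V. v < r} = {1..<r}" "{v \<in> ?V. v > r} = {r<..n+1}" by auto
    with r show "card (?trees r) = ((r - 1) choose k) * ((n + 1 - r) choose l) * forest_count n (k + l)"
      using card_trees_children_below_above[of ?V r] by simp
  qed
  also have "\<dots> = (\<Sum>r\<in>?V. ((r - 1) choose k) * ((n + 1 - r) choose l)) * forest_count n (k + l)"
    by (simp only: sum_distrib_right)
  also have "(\<Sum>r\<in>?V. ((r - 1) choose k) * ((n + 1 - r) choose l)) = (n + 1) choose (k + l + 1)"
    by (rule sum_choose_below_above)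
  finally show ?thesis .
qed

theorem mainTheorem1:
  fixes n k l :: nat
  assumes "n \<ge> 1" and "k + l \<le> n"
  shows "real (card {(E, r) \<in> rooted_trees {1..n+1}.
                 card {c \<in> children E r. c < r} = k \<and>
                 card {c \<in> children E r. c > r} = l})
         = real ((n + 1) choose (k + l + 1)) * real (k + l)
           * real n powi (int n - int k - int l - 1)"
proof -
  have "real (forest_count n (k + l)) = real (k + l) * real n powi (int n - int k - int l - 1)"
    using real_forest_count[of n "k + l"] assms by (simp add: algebra_simps)
  then show ?thesis unfolding card_rooted_trees_children_below_above by simp
qed

end
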